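(* Let $N\ge 2$, $h\ge 1$, $\Lambda\ge 1$ be integers, and let $f(X)\in\mathbb{F}_2[X]$ be a nonzero polynomial of degree at most $N h\Lambda\lceil\log N\rceil$ (logarithms base $2$). Consider the following procedure: for $i=1,2,\dots,\lceil\log N\rceil$ in order, compute $r_i(X)=f(X)\bmod (X^{2^i}+X)$, stopping at the first index $j$ for which $r_j(X)\neq 0$ (assume such $j\le\lceil\log N\rceil$ exists); then, with $\tilde f(X)=f(X)\bmod(X^{2^j}+X)$, divide $\tilde f(X)$ by the irreducible polynomials of degree $j$ over $\mathbb{F}_2$ until one is found that is coprime with $\tilde f(X)$ (equivalently with $f(X)$), and output it. The total complexity (number of field operations) of this procedure is at most $O(N^2)+O\big(hN(\log N)^2\Lambda\big)$.
   Context: All polynomials are over $\mathbb{F}_2$. Division of two polynomials, one of degree $w$, is assumed to cost $O(w\log w)$ operations. For each $i$, $X^{2^i}+X$ is the product of all irreducible binary polynomials whose degree divides $i$. *)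

theory Defs
  imports "Berlekamp_Zassenhaus.Finite_Field" "HOL-Computational_Algebra.Polynomial"
begin

type_synonym gf2 = "bool mod_ring"

definition frob_mod :: "nat \<Rightarrow> gf2 poly" where
  "frob_mod i = monom 1 (2 ^ i) + monom 1 1"

definition clog :: "nat \<Rightarrow> nat" where
  "clog N = nat \<lceil>log 2 (real N)\<rceil>"

definition stop_index :: "gf2 poly \<Rightarrow> nat" where
  "stop_index f = (LEAST i. 1 \<le> i \<and> f mod frob_mod i \<noteq> 0)"

text \<open>Number of irreducible polynomials tried in the second phase, when they are tried
  in the order of the list ps: all those dividing ftil, plus the first coprime one.\<close>
definition num_trials :: "gf2 poly list \<Rightarrow> gf2 poly \<Rightarrow> nat" where
  "num_trials ps ftil = length (takeWhile (\<lambda>p. p dvd ftil) ps) + 1"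

text \<open>Total cost of the procedure. redcost d: cost of reducing a polynomial of degree d
  modulo X^(2^i)+X; divcost w: cost of a division in which the larger degree is w.
  Phase 1 performs j reductions of f; phase 2 performs one division of ftil
  (degree < 2^j) by an irreducible of degree j per trial.\<close>
definition proc_cost ::
  "(nat \<Rightarrow> real) \<Rightarrow> (nat \<Rightarrow> real) \<Rightarrow> gf2 poly list \<Rightarrow> gf2 poly \<Rightarrow> real" where
  "proc_cost redcost divcost ps f =
     (let j = stop_index f; ftil = f mod frob_mod j in
       (\<Sum>i=1..j. redcost (degree f)) + real (num_trials ps ftil) * divcost (2 ^ j))"

end

theory Submission
  imports Defs
begin

text \<open>Phase 1 performs \<open>j \<le> \<lceil>log N\<rceil>\<close> reductions of \<open>f\<close>, each of cost \<open>O(deg f) = O(N h \<Lambda> log N)\<close>.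
  In phase 2 every irreducible of degree \<open>j\<close> tried before the coprime one divides the nonzero
  polynomial \<open>f mod (X^(2^j) + X)\<close> of degree below \<open>2^j\<close>; distinct monic irreducibles are
  pairwise coprime, so the number \<open>m\<close> of these divisors satisfies \<open>m j < 2^j \<le> 2N\<close>, and the
  \<open>m + 1\<close> divisions, each of cost \<open>O(2^j j)\<close>, cost \<open>O(N^2 + N log N)\<close> in total.\<close>

lemma prod_list_dvd_if_distinct_prime_divisors:
  fixes g :: "'a :: factorial_semiring_gcd"
  assumes "distinct ps" and "\<forall>p\<in>set ps. prime p \<and> p dvd g"
  shows "prod_list ps dvd g"
  using assms
proof (induction ps)
  case Nil
  then show ?case by simp
next
  case (Cons p ps)
  then have "prime p" by simp
  have "\<not> p dvd prod_list ps"
  proof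
    assume "p dvd prod_list ps"
    moreover have "prime_elem p" using \<open>prime p\<close> by (simp add: prime_def)
    ultimately obtain q where "q \<in> set ps" "p dvd q"
      using prime_elem_dvd_prod_list by blast
    with Cons.prems(2) have "p = q" by (simp add: primes_dvd_imp_eq)
    with \<open>q \<in> set ps\<close> Cons.prems(1) show False by simp
  qed
  with \<open>prime p\<close> have "coprime p (prod_list ps)"
    by (simp add: prime_def prime_elem_imp_coprime)
  then show ?case using Cons by (simp add: divides_mult)
qed

lemma length_mult_degree_le_if_distinct_prime_divisors:
  fixes g :: "'a :: {factorial_ring_gcd, semiring_gcd_mult_normalize} poly"
  assumes "distinct ps" and "\<forall>p\<in>set ps. prime p \<and> degree p = j \<and> p dvd g" and "g \<noteq> 0"
  shows "length ps * j \<le> degree g"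
proof -
  have "prod_list ps dvd g"
    using assms by (intro prod_list_dvd_if_distinct_prime_divisors) auto
  then have "degree (prod_list ps) \<le> degree g"
    using \<open>g \<noteq> 0\<close> by (rule dvd_imp_degree_le)
  moreover have "degree (prod_list ps) = sum_list (map degree ps)"
    using assms(2) by (intro degree_prod_list_eq) auto
  moreover have "sum_list (map degree ps) = length ps * j"
    using assms(2) by (induction ps) auto
  ultimately show ?thesis by simp
qed

lemma gf2_nonzero_eq_one:
  fixes a :: gf2
  assumes "a \<noteq> 0"
  shows "a = 1"
proof -
  obtain x y where "(UNIV :: gf2 set) = {x, y}"
    using card_2_iff[of "UNIV :: gf2 set"] by auto
  then have "a \<in> {x, y}" "0 \<in> {x, y}" "1 \<in> {x, y}" by auto
  moreover have "(0::gf2) \<noteq> 1" by simp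
  ultimately show ?thesis using assms by auto
qed

lemma irreducible_gf2_poly_imp_prime:
  fixes p :: "gf2 poly"
  assumes "irreducible p"
  shows "prime p"
proof (rule primeI)
  show "prime_elem p" using assms by (rule irreducible_imp_prime_elem)
  have "lead_coeff p = 1" using assms by (intro gf2_nonzero_eq_one) auto
  then show "normalize p = p" by (intro normalize_monic)
qed

lemma degree_frob_mod:
  assumes "i \<ge> 1"
  shows "degree (frob_mod i) = 2 ^ i"
proof -
  have "(1::nat) < 2 ^ i" using assms by (intro one_less_power) auto
  then show ?thesis unfolding frob_mod_def
    by (subst degree_add_eq_left) (auto simp: degree_monom_eq)
qed

lemma stop_index_bounds:
  assumes "\<exists>j\<in>{1..n}. f mod frob_mod j \<noteq> 0"
  shows "1 \<le> stop_index f" and "stop_index f \<le> n" and "f mod frob_mod (stop_index f) \<noteq> 0"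
proof -
  obtain j where j: "j \<in> {1..n}" "f mod frob_mod j \<noteq> 0" using assms by blast
  have "1 \<le> stop_index f \<and> f mod frob_mod (stop_index f) \<noteq> 0"
    unfolding stop_index_def by (rule LeastI[of _ j]) (use j in auto)
  then show "1 \<le> stop_index f" and "f mod frob_mod (stop_index f) \<noteq> 0" by auto
  have "stop_index f \<le> j"
    unfolding stop_index_def by (rule Least_le) (use j in auto)
  with j show "stop_index f \<le> n" by auto
qed

lemma num_trials_mult_degree_less:
  assumes "distinct ps" and "set ps = {p. irreducible p \<and> degree p = j}"
    and "j \<ge> 1" and "f mod frob_mod j \<noteq> 0"
  shows "num_trials ps (f mod frob_mod j) * j < 2 ^ j + j"
proof -
  define g where "g = f mod frob_mod j"
  define divisors where "divisors = takeWhile (\<lambda>p. p dvd g) ps"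
  have "length divisors * j \<le> degree g"
  proof (rule length_mult_degree_le_if_distinct_prime_divisors)
    show "distinct divisors"
      unfolding divisors_def using assms(1) by (rule distinct_takeWhile)
    show "\<forall>p\<in>set divisors. prime p \<and> degree p = j \<and> p dvd g"
      using assms(2) irreducible_gf2_poly_imp_prime
      unfolding divisors_def by (auto dest: set_takeWhileD)
    show "g \<noteq> 0" using assms(4) by (simp add: g_def)
  qed
  also have "degree g < 2 ^ j"
  proof -
    have "frob_mod j \<noteq> 0" using degree_frob_mod[OF assms(3)] by auto
    then show ?thesis
      using degree_mod_less'[of "frob_mod j" f] assms(4) degree_frob_mod[OF assms(3)]
      by (simp add: g_def)
  qed
  finally show ?thesis
    by (simp add: num_trials_def divisors_def g_def)
qed

lemma proc_cost_le:
  fixes c :: real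
  assumes "c \<ge> 0"
    and redcost: "\<forall>d. redcost d \<le> c * (real d + 1)"
    and divcost: "\<forall>w. 2 \<le> w \<longrightarrow> divcost w \<le> c * real w * log 2 (real w)"
    and "distinct ps" and "set ps = {p. irreducible p \<and> degree p = j}"
    and j: "j = stop_index f" "j \<ge> 1" "f mod frob_mod j \<noteq> 0"
  shows "proc_cost redcost divcost ps f
    \<le> c * (real j * (real (degree f) + 1) + (2 ^ j + real j) * 2 ^ j)"
proof -
  define t where "t = num_trials ps (f mod frob_mod j)"
  have "t * j < 2 ^ j + j"
    unfolding t_def using assms(4-5) j(2-3) by (rule num_trials_mult_degree_less)
  then have "real (t * j) \<le> real (2 ^ j + j)" by linarith
  then have trials: "real t * real j \<le> 2 ^ j + real j" by simp
  have "2 \<le> (2::nat) ^ j" using one_less_power[of "2::nat" j] j(2) by simp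
  then have "divcost (2 ^ j) \<le> c * real (2 ^ j) * log 2 (real (2 ^ j))" using divcost by blast
  also have "\<dots> = c * 2 ^ j * real j" by (simp add: log_nat_power)
  finally have "real t * divcost (2 ^ j) \<le> real t * (c * 2 ^ j * real j)"
    by (intro mult_left_mono) auto
  also have "\<dots> = c * 2 ^ j * (real t * real j)" by (simp add: mult_ac)
  also have "\<dots> \<le> c * 2 ^ j * (2 ^ j + real j)"
    using trials \<open>c \<ge> 0\<close> by (intro mult_left_mono) auto
  finally have phase2: "real t * divcost (2 ^ j) \<le> c * ((2 ^ j + real j) * 2 ^ j)"
    by (simp add: mult_ac)
  have "real j * redcost (degree f) \<le> real j * (c * (real (degree f) + 1))"
    using redcost by (intro mult_left_mono) auto
  then have phase1: "real j * redcost (degree f) \<le> c * (real j * (real (degree f) + 1))"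
    by (simp add: mult_ac)
  have "proc_cost redcost divcost ps f = real j * redcost (degree f) + real t * divcost (2 ^ j)"
    by (simp add: proc_cost_def Let_def j(1)[symmetric] t_def)
  also have "\<dots> \<le> c * (real j * (real (degree f) + 1)) + c * ((2 ^ j + real j) * 2 ^ j)"
    using phase1 phase2 by (rule add_mono)
  finally show ?thesis by (simp only: distrib_left)
qed

lemma clog_less:
  assumes "N \<ge> 1"
  shows "real (clog N) < log 2 (real N) + 1"
  using assms by (simp add: clog_def) linarith

lemma clog_le_twice_log:
  assumes "N \<ge> 2"
  shows "real (clog N) \<le> 2 * log 2 (real N)"
proof -
  have "1 \<le> log 2 (real N)" using assms by simp
  with clog_less[of N] assms show ?thesis by linarith
qed

lemma two_power_le_if_le_clog:
  assumes "N \<ge> 1" and "j \<le> clog N"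
  shows "(2::real) ^ j \<le> 2 * real N"
proof -
  have "(2::real) ^ j \<le> 2 powr real (clog N)"
    using assms(2) by (simp add: powr_realpow power_increasing)
  also have "\<dots> \<le> 2 powr (log 2 (real N) + 1)"
    using clog_less[OF assms(1)] by (intro powr_mono) auto
  also have "\<dots> = 2 * real N" using assms(1) by (simp add: powr_add)
  finally show ?thesis .
qed

lemma log2_less_self:
  assumes "N \<ge> 1"
  shows "log 2 (real N) < real N"
  using assms less_exp[of N] by (intro log2_of_power_less) auto

lemma cost_bound_arith:
  fixes L N H J P D :: real
  assumes "1 \<le> L" "L \<le> N" "0 \<le> J" "J \<le> 2 * L" "0 \<le> P" "P \<le> 2 * N" "0 \<le> H" "0 \<le> D" "D \<le> 2 * H * L"
  shows "J * (D + 1) + (P + J) * P \<le> 10 * (N\<^sup>2 + H * L\<^sup>2)"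
proof -
  have "J * (D + 1) \<le> 2 * L * (2 * H * L + 1)"
    using assms by (intro mult_mono) auto
  moreover have "(P + J) * P \<le> (2 * N + 2 * N) * (2 * N)"
    using assms by (intro mult_mono) auto
  moreover have "L \<le> N\<^sup>2"
    using assms(1,2) mult_mono[of 1 N L N] by (simp add: power2_eq_square)
  moreover have "0 \<le> H * L\<^sup>2" using assms(7) by simp
  ultimately show ?thesis by (simp add: algebra_simps power2_eq_square)
qed

lemma cost_terms_le_of_le_clog:
  assumes "N \<ge> 2" and "j \<le> clog N" and "d \<le> H * clog N"
  shows "real j * (real d + 1) + (2 ^ j + real j) * 2 ^ j
    \<le> 10 * ((real N)\<^sup>2 + real H * (log 2 (real N))\<^sup>2)"
proof (rule cost_bound_arith)
  define L where "L = log 2 (real N)"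
  show "1 \<le> L" using assms(1) by (simp add: L_def)
  show "L \<le> real N" using log2_less_self[of N] assms(1) by (simp add: L_def)
  have clog_le: "real (clog N) \<le> 2 * L"
    unfolding L_def using assms(1) by (rule clog_le_twice_log)
  then show "real j \<le> 2 * L" using assms(2) by linarith
  show "(2::real) ^ j \<le> 2 * real N"
    using assms(1,2) by (intro two_power_le_if_le_clog) auto
  have "real d \<le> real H * real (clog N)"
    using assms(3) by (metis of_nat_le_iff of_nat_mult)
  also have "\<dots> \<le> real H * (2 * L)"
    using clog_le by (intro mult_left_mono) auto
  finally show "real d \<le> 2 * real H * L" by simp
qed auto

theorem proposition1:
  fixes c :: real
  assumes "c > 0"
  shows "\<exists>K. \<forall>(redcost :: nat \<Rightarrow> real) (divcost :: nat \<Rightarrow> real)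
            (N :: nat) (h :: nat) (\<Lambda> :: nat) (f :: gf2 poly) (ps :: gf2 poly list).
     (\<forall>d. redcost d \<le> c * (real d + 1)) \<longrightarrow>
     (\<forall>w. 2 \<le> w \<longrightarrow> divcost w \<le> c * real w * log 2 (real w)) \<longrightarrow>
     N \<ge> 2 \<longrightarrow> h \<ge> 1 \<longrightarrow> \<Lambda> \<ge> 1 \<longrightarrow>
     f \<noteq> 0 \<longrightarrow> degree f \<le> N * h * \<Lambda> * clog N \<longrightarrow>
     (\<exists>j\<in>{1..clog N}. f mod frob_mod j \<noteq> 0) \<longrightarrow>
     distinct ps \<longrightarrow>
     set ps = {p. irreducible p \<and> degree p = stop_index f} \<longrightarrow>
     proc_cost redcost divcost ps f
       \<le> K * (real N ^ 2 + real h * real N * (log 2 (real N))\<^sup>2 * real \<Lambda>)"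
proof (intro exI[of _ "10 * c"] allI impI)
  fix redcost divcost :: "nat \<Rightarrow> real" and N h \<Lambda> :: nat and f :: "gf2 poly" and ps :: "gf2 poly list"
  assume redcost: "\<forall>d. redcost d \<le> c * (real d + 1)"
    and divcost: "\<forall>w. 2 \<le> w \<longrightarrow> divcost w \<le> c * real w * log 2 (real w)"
    and "N \<ge> 2" and "h \<ge> 1" and "\<Lambda> \<ge> 1" and "f \<noteq> 0"
    and deg_f: "degree f \<le> N * h * \<Lambda> * clog N"
    and stops: "\<exists>j\<in>{1..clog N}. f mod frob_mod j \<noteq> 0"
    and "distinct ps" and ps_irreducibles: "set ps = {p. irreducible p \<and> degree p = stop_index f}"
  define j where "j = stop_index f"
  note j_bounds = stop_index_bounds[OF stops, folded j_def]
  have "c * (real j * (real (degree f) + 1) + (2 ^ j + real j) * 2 ^ j)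
      \<le> c * (10 * ((real N)\<^sup>2 + real (N * h * \<Lambda>) * (log 2 (real N))\<^sup>2))"
    using \<open>c > 0\<close> \<open>N \<ge> 2\<close> j_bounds(2) deg_f
    by (intro mult_left_mono cost_terms_le_of_le_clog) auto
  with proc_cost_le[OF _ redcost divcost \<open>distinct ps\<close> ps_irreducibles[folded j_def] j_def]
  have "proc_cost redcost divcost ps f
      \<le> c * (10 * ((real N)\<^sup>2 + real (N * h * \<Lambda>) * (log 2 (real N))\<^sup>2))"
    using \<open>c > 0\<close> j_bounds(1,3) by (meson less_imp_le order.trans)
  then show "proc_cost redcost divcost ps f
      \<le> 10 * c * (real N ^ 2 + real h * real N * (log 2 (real N))\<^sup>2 * real \<Lambda>)"
    by (simp add: algebra_simps)
qed

end
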